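(* Let $A\in\mathbb{R}^{n\times n}$, $B\in\mathbb{R}^{n\times m}$, $C\in\mathbb{R}^{p\times n}$, $D\in\mathbb{R}^{p\times m}$ and $K\in\mathbb{N}$, and let $$\mathcal{O}_K=\begin{bmatrix} C^\top & (CA)^\top & \cdots & (CA^{K-1})^\top\end{bmatrix}^\top\in\mathbb{R}^{pK\times n}.$$ Assume $\mathcal{O}_K$ has full column rank, and set $\mathcal{W}_o:=\mathcal{O}_K^\top\mathcal{O}_K$. Let $\Sigma_v\in\mathbb{R}^{n\times n}$ with $\Sigma_v\succ 0$. Consider the matrix equation $$(\mathcal{O}_K^\top X\mathcal{O}_K)^{-1}=\Sigma_v \qquad (\ast)$$ in the unknown $X\in\mathbb{R}^{pK\times pK}$, and the set $S_X:=\{X\in\mathbb{R}^{pK\times pK}\mid (\ast)\text{ holds}\}$. Then: (i) $S_X$ is nonempty and $$S_X=\{N^\top N+R-MRM \mid R\in\mathbb{R}^{pK\times pK}\},$$ where $M:=\mathcal{O}_K\mathcal{W}_o^{-1}\mathcal{O}_K^\top$ and $N:=\Sigma_v^{-1/2}\mathcal{W}_o^{-1}\mathcal{O}_K^\top$. (ii) The set $S_X^+:=\{X\in S_X\mid X\succ 0\}$ is nonempty. (iii) If $pK=n$, then $S_X^+$ is a singleton, namely $S_X^+=\{N^\top N\}$.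
   Context: $\Sigma_v^{-1/2}$ denotes the symmetric positive definite square root of $\Sigma_v^{-1}$. For a square matrix, $X\succ 0$ means $X$ is symmetric positive definite. Equation $(\ast)$ includes the requirement that $\mathcal{O}_K^\top X\mathcal{O}_K$ be invertible. *)

theory Defs
  imports "Jordan_Normal_Form.Gauss_Jordan_Elimination" "Jordan_Normal_Form.DL_Rank"
begin

definition obs_mat :: "nat \<Rightarrow> nat \<Rightarrow> nat \<Rightarrow> real mat \<Rightarrow> real mat \<Rightarrow> real mat" where
  "obs_mat n p K A C = mat (p * K) n (\<lambda>(i, j). (C * A ^\<^sub>m (i div p)) $$ (i mod p, j))"

definition pos_def :: "nat \<Rightarrow> real mat \<Rightarrow> bool" where
  "pos_def k X \<longleftrightarrow> X \<in> carrier_mat k k \<and> X\<^sup>T = X \<and>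
     (\<forall>x \<in> carrier_vec k. x \<noteq> 0\<^sub>v k \<longrightarrow> x \<bullet> (X *\<^sub>v x) > 0)"

text \<open>Matrix inverse (meaningful for invertible square matrices).\<close>
definition minv :: "real mat \<Rightarrow> real mat" where
  "minv X = the (mat_inverse X)"

definition inv_sqrt :: "real mat \<Rightarrow> real mat" where
  "inv_sqrt S = (THE R. pos_def (dim_row S) R \<and> R * R = minv S)"

end

(* Since O_K has full column rank, W_o = O_K^T O_K is positive definite and M = O_K W_o^-1 O_K^T
   is the orthogonal projection onto the range of O_K: O_K^T M = O_K^T and M O_K = O_K.
   As N O_K = Sigma_v^(-1/2), the matrix N^T N solves O_K^T X O_K = Sigma_v^-1, and X is a
   solution iff X - N^T N is annihilated by X |-> O_K^T X O_K, i.e. iff X - N^T N = R - M R M for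
   some R (conversely take R = X - N^T N, for which M R M = 0). The choice R = I gives
   N^T N + (I - M)^T (I - M), which is positive definite because N and I - M have no common
   kernel. If pK = n, then O_K is invertible, M = I and N^T N is the only solution.
   Sigma_v^(-1/2) is well defined: a positive definite square root exists by splitting off one
   eigenvector at a time with Householder reflections, and it is unique by a trace argument. *)

theory Submission
  imports Defs "Jordan_Normal_Form.Char_Poly"
begin

lemma eq_mat_by_mult_vec:
  fixes A B :: "'a :: semiring_1 mat"
  assumes A: "A \<in> carrier_mat nr nc" and B: "B \<in> carrier_mat nr nc"
    and eq: "\<And>x. x \<in> carrier_vec nc \<Longrightarrow> A *\<^sub>v x = B *\<^sub>v x"
  shows "A = B"
proof (rule eq_matI)
  fix i j assume i: "i < dim_row B" and j: "j < dim_col B"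
  have "A $$ (i, j) = (A *\<^sub>v unit_vec nc j) $ i" using A B i j by simp
  also have "\<dots> = (B *\<^sub>v unit_vec nc j) $ i" using eq by simp
  also have "\<dots> = B $$ (i, j)" using B i j by simp
  finally show "A $$ (i, j) = B $$ (i, j)" .
qed (use A B in auto)

lemma minus_vec_eq_zero_iff:
  fixes u v :: "'a :: ab_group_add vec"
  assumes "u \<in> carrier_vec n" and "v \<in> carrier_vec n"
  shows "u - v = 0\<^sub>v n \<longleftrightarrow> u = v"
proof
  assume "u - v = 0\<^sub>v n"
  then have "(u - v) $ i = 0" if "i < n" for i
    using that by simp
  then show "u = v" using assms by (intro eq_vecI) auto
qed (use assms in auto)

lemma append_vec_eq_zero_iff:
  assumes "a \<in> carrier_vec n1" and "b \<in> carrier_vec n2"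
  shows "a @\<^sub>v b = 0\<^sub>v (n1 + n2) \<longleftrightarrow> a = 0\<^sub>v n1 \<and> b = 0\<^sub>v n2"
proof -
  have "0\<^sub>v (n1 + n2) = (0\<^sub>v n1 @\<^sub>v 0\<^sub>v n2 :: 'a :: zero vec)" by (intro eq_vecI) auto
  then show ?thesis using assms by simp
qed

lemma assoc_mult_mat_dims:
  fixes A B C :: "'a :: semiring_0 mat"
  assumes "dim_col A = dim_row B" and "dim_col B = dim_row C"
  shows "A * B * C = A * (B * C)"
  using assms by (intro assoc_mult_mat[of A "dim_row A" "dim_col A" B "dim_col B" C "dim_col C"]) auto

lemma add_minus_cancel_mat:
  fixes A B :: "'a :: ab_group_add mat"
  assumes "A \<in> carrier_mat nr nc" and "B \<in> carrier_mat nr nc"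
  shows "A + B - B = A"
  using assms by (intro eq_matI) auto

lemma mult_add_minus_distrib_mat:
  fixes L A B C R :: "'a :: comm_ring mat"
  assumes L: "L \<in> carrier_mat k m" and A: "A \<in> carrier_mat m m" and B: "B \<in> carrier_mat m m"
    and C: "C \<in> carrier_mat m m" and R: "R \<in> carrier_mat m l"
  shows "L * (A + B - C) * R = L * A * R + L * B * R - L * C * R"
proof -
  have "L * (A + B - C) = L * (A + B) - L * C"
    by (rule mult_minus_distrib_mat) (use L A B C in auto)
  also have "L * (A + B) = L * A + L * B"
    by (rule mult_add_distrib_mat) (use L A B in auto)
  finally have "L * (A + B - C) * R = (L * A + L * B - L * C) * R" by simp
  also have "\<dots> = (L * A + L * B) * R - L * C * R"
    by (rule minus_mult_distrib_mat) (use L A B C R in auto)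
  also have "(L * A + L * B) * R = L * A * R + L * B * R"
    by (rule add_mult_distrib_mat) (use L A B R in auto)
  finally show ?thesis .
qed

lemma scalar_prod_transpose_mult_self:
  fixes A :: "'a :: comm_semiring_0 mat"
  assumes A: "A \<in> carrier_mat m k" and x: "x \<in> carrier_vec k"
  shows "x \<bullet> ((A\<^sup>T * A) *\<^sub>v x) = (A *\<^sub>v x) \<bullet> (A *\<^sub>v x)"
proof -
  have "x \<bullet> ((A\<^sup>T * A) *\<^sub>v x) = (A\<^sup>T *\<^sub>v (A *\<^sub>v x)) \<bullet> x"
    using A x by (simp add: comm_scalar_prod[of x k])
  also have "\<dots> = (A *\<^sub>v x) \<bullet> (A *\<^sub>v x)"
    using A x by (intro transpose_vec_mult_scalar) auto
  finally show ?thesis .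
qed

lemma involution_mult_cancel:
  fixes H Z :: "'a :: semiring_1 mat"
  assumes H: "H \<in> carrier_mat n n" "H * H = 1\<^sub>m n" and Z: "Z \<in> carrier_mat n m"
  shows "H * (H * Z) = Z"
  using assoc_mult_mat[of H n n H n Z m] H Z by simp

lemma involution_conjugation_mult:
  fixes H X Y :: "'a :: semiring_1 mat"
  assumes H: "H \<in> carrier_mat n n" "H * H = 1\<^sub>m n"
    and X: "X \<in> carrier_mat n n" and Y: "Y \<in> carrier_mat n n"
  shows "(H * X * H) * (H * Y * H) = H * (X * Y) * H"
  using H X Y involution_mult_cancel[OF H, of "Y * H" n]
  by (simp add: assoc_mult_mat[of _ n n _ n _ n])

lemma involution_conjugation_twice:
  fixes H X :: "'a :: semiring_1 mat"
  assumes H: "H \<in> carrier_mat n n" "H * H = 1\<^sub>m n" and X: "X \<in> carrier_mat n n"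
  shows "H * (H * X * H) * H = X"
  using H X involution_mult_cancel[OF H, of X n] involution_mult_cancel[OF H, of "X * H" n]
  by (simp add: assoc_mult_mat[of _ n n _ n _ n])

lemma four_block_diag_mult:
  fixes A1 A2 B1 B2 :: "'a :: semiring_0 mat"
  assumes A1: "A1 \<in> carrier_mat n1 n1" and A2: "A2 \<in> carrier_mat n1 n1"
    and B1: "B1 \<in> carrier_mat n2 n2" and B2: "B2 \<in> carrier_mat n2 n2"
  shows "four_block_mat A1 (0\<^sub>m n1 n2) (0\<^sub>m n2 n1) B1 * four_block_mat A2 (0\<^sub>m n1 n2) (0\<^sub>m n2 n1) B2
    = four_block_mat (A1 * A2) (0\<^sub>m n1 n2) (0\<^sub>m n2 n1) (B1 * B2)"
  by (subst mult_four_block_mat[OF A1 zero_carrier_mat zero_carrier_mat B1 A2 zero_carrier_mat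
      zero_carrier_mat B2]) (use A1 A2 B1 B2 in simp)

lemma four_block_diag_quadratic_form:
  fixes A B :: "'a :: comm_ring_1 mat"
  assumes A: "A \<in> carrier_mat n1 n1" and B: "B \<in> carrier_mat n2 n2"
    and a: "a \<in> carrier_vec n1" and b: "b \<in> carrier_vec n2"
  shows "(a @\<^sub>v b) \<bullet> (four_block_mat A (0\<^sub>m n1 n2) (0\<^sub>m n2 n1) B *\<^sub>v (a @\<^sub>v b))
    = a \<bullet> (A *\<^sub>v a) + b \<bullet> (B *\<^sub>v b)"
proof -
  have "0\<^sub>m n1 n2 *\<^sub>v b = 0\<^sub>v n1" "0\<^sub>m n2 n1 *\<^sub>v a = 0\<^sub>v n2"
    using a b by (auto intro!: eq_vecI)
  then have "four_block_mat A (0\<^sub>m n1 n2) (0\<^sub>m n2 n1) B *\<^sub>v (a @\<^sub>v b) = (A *\<^sub>v a) @\<^sub>v (B *\<^sub>v b)"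
    using four_block_mat_mult_vec[OF A _ _ B a b] A B a b by simp
  then show ?thesis
    using A B a b by (simp add: scalar_prod_append[of _ n1 _ n2])
qed

lemma four_block_diag_symmetric_iff:
  assumes A: "A \<in> carrier_mat n1 n1" and B: "B \<in> carrier_mat n2 n2"
  shows "(four_block_mat A (0\<^sub>m n1 n2) (0\<^sub>m n2 n1) B)\<^sup>T = four_block_mat A (0\<^sub>m n1 n2) (0\<^sub>m n2 n1) B
    \<longleftrightarrow> A\<^sup>T = A \<and> B\<^sup>T = B"
    (is "?M\<^sup>T = ?M \<longleftrightarrow> _")
proof -
  have MT: "?M\<^sup>T = four_block_mat A\<^sup>T (0\<^sub>m n1 n2) (0\<^sub>m n2 n1) B\<^sup>T"
    using transpose_four_block_mat[OF A _ _ B] by simp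
  show ?thesis
  proof
    assume "?M\<^sup>T = ?M"
    then have sym: "?M\<^sup>T $$ (i, j) = ?M $$ (i, j)" for i j by simp
    have "A\<^sup>T = A"
    proof (rule eq_matI)
      fix i j assume "i < dim_row A" "j < dim_col A"
      then show "A\<^sup>T $$ (i, j) = A $$ (i, j)"
        using A B sym[of i j] unfolding MT by simp
    qed (use A in auto)
    moreover have "B\<^sup>T = B"
    proof (rule eq_matI)
      fix i j assume "i < dim_row B" "j < dim_col B"
      then show "B\<^sup>T $$ (i, j) = B $$ (i, j)"
        using A B sym[of "n1 + i" "n1 + j"] unfolding MT by simp
    qed (use B in auto)
    ultimately show "A\<^sup>T = A \<and> B\<^sup>T = B" ..
  qed (simp add: MT)
qed

lemma symmetric_block_diag_if_eigen_unit_vec: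
  fixes A :: "'a :: comm_ring_1 mat"
  assumes A: "A \<in> carrier_mat (Suc k) (Suc k)" and sym: "A\<^sup>T = A"
    and e: "A *\<^sub>v unit_vec (Suc k) 0 = c \<cdot>\<^sub>v unit_vec (Suc k) 0"
  shows "A = four_block_mat (mat 1 1 (\<lambda>_. c)) (0\<^sub>m 1 k) (0\<^sub>m k 1) (mat k k (\<lambda>(i, j). A $$ (Suc i, Suc j)))"
proof -
  have col: "A $$ (i, 0) = (if i = 0 then c else 0)" if "i < Suc k" for i
    using arg_cong[OF e, of "\<lambda>v. v $ i"] that A by simp
  have row: "A $$ (0, j) = (if j = 0 then c else 0)" if "j < Suc k" for j
    using col[OF that] arg_cong[OF sym, of "\<lambda>B. B $$ (j, 0)"] that A by simp
  show ?thesis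
    by (rule eq_matI) (use A col row in \<open>auto simp: gr0_conv_Suc\<close>)
qed

section \<open>Real symmetric matrices\<close>

lemma real_symmetric_eigenvalue_real:
  fixes A :: "real mat"
  assumes A: "A \<in> carrier_mat k k" and sym: "A\<^sup>T = A"
    and ev: "eigenvector (map_mat complex_of_real A) v a"
  shows "Im a = 0"
proof -
  let ?A = "map_mat complex_of_real A"
  have v: "v \<in> carrier_vec k" "v \<noteq> 0\<^sub>v k" and Av: "?A *\<^sub>v v = a \<cdot>\<^sub>v v"
    using ev A unfolding eigenvector_def by auto
  have "?A *\<^sub>v conjugate v = conjugate (?A *\<^sub>v v)"
    using A v by (intro eq_vecI) (auto simp: scalar_prod_def)
  then have A_conj: "?A *\<^sub>v conjugate v = cnj a \<cdot>\<^sub>v conjugate v"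
    using Av v by (simp add: conjugate_smult_vec)
  have "a * (v \<bullet>c v) = (?A\<^sup>T *\<^sub>v v) \<bullet> conjugate v"
    using v A by (simp add: map_mat_transpose sym Av)
  also have "\<dots> = v \<bullet> (?A *\<^sub>v conjugate v)"
    using v A by (intro transpose_vec_mult_scalar) auto
  also have "\<dots> = cnj a * (v \<bullet>c v)"
    using v by (simp add: A_conj)
  finally have "a = cnj a"
    using conjugate_square_eq_0_vec[OF v(1)] v(2) by simp
  then show ?thesis
    by (metis cnj.sel(2) neg_equal_zero)
qed

lemma real_symmetric_has_unit_eigenvector:
  fixes A :: "real mat"
  assumes A: "A \<in> carrier_mat k k" and sym: "A\<^sup>T = A" and k: "k > 0"
  obtains e u where "u \<in> carrier_vec k" "u \<bullet> u = 1" "A *\<^sub>v u = e \<cdot>\<^sub>v u"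
proof -
  let ?A = "map_mat complex_of_real A"
  have A': "?A \<in> carrier_mat k k" using A by simp
  obtain as where cp: "char_poly ?A = (\<Prod>a\<leftarrow>as. [:- a, 1:])" and len: "length as = k"
    using char_poly_factorized[OF A'] by blast
  obtain a where a: "a \<in> set as" using len k by (cases as) auto
  have root: "poly (char_poly ?A) a = 0"
    unfolding cp poly_prod_list using a by (induct as) auto
  then obtain v where "eigenvector ?A v a"
    using eigenvalue_root_char_poly[OF A'] unfolding eigenvalue_def by blast
  then have "a = of_real (Re a)"
    using real_symmetric_eigenvalue_real[OF A sym] by (simp add: complex_eq_iff)
  then have "poly (char_poly A) (Re a) = 0"
    using root by (metis of_real_hom.char_poly_hom[OF A] of_real_hom.poly_map_poly of_real_eq_0_iff)
  then obtain w where "eigenvector A w (Re a)"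
    using eigenvalue_root_char_poly[OF A] unfolding eigenvalue_def by blast
  then have w: "w \<in> carrier_vec k" "w \<noteq> 0\<^sub>v k" "A *\<^sub>v w = Re a \<cdot>\<^sub>v w"
    using A unfolding eigenvector_def by auto
  define u where "u = (1 / sqrt (w \<bullet> w)) \<cdot>\<^sub>v w"
  have "w \<bullet> w > 0"
    using conjugate_square_greater_0_vec[OF w(1)] w(2) by simp
  then have "u \<bullet> u = 1"
    using w(1) unfolding u_def by (simp add: power2_eq_square[symmetric])
  moreover have "A *\<^sub>v u = Re a \<cdot>\<^sub>v u"
    using mult_mat_vec[OF A w(1)] w unfolding u_def by (simp add: smult_smult_assoc mult.commute)
  moreover have "u \<in> carrier_vec k"
    using w(1) unfolding u_def by simp
  ultimately show thesis
    using that by blast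
qed

definition householder_mat :: "nat \<Rightarrow> real vec \<Rightarrow> real mat" where
  "householder_mat k w = mat k k (\<lambda>(i, j). of_bool (i = j) - 2 / (w \<bullet> w) * w $ i * w $ j)"

lemma householder_mat_carrier [simp]: "householder_mat k w \<in> carrier_mat k k"
  unfolding householder_mat_def by simp

lemma householder_mat_symmetric: "(householder_mat k w)\<^sup>T = householder_mat k w"
  unfolding householder_mat_def by (rule eq_matI) auto

lemma householder_mat_mult_vec:
  assumes w: "w \<in> carrier_vec k" and x: "x \<in> carrier_vec k"
  shows "householder_mat k w *\<^sub>v x = x - (2 / (w \<bullet> w) * (w \<bullet> x)) \<cdot>\<^sub>v w"
proof (rule eq_vecI)
  fix i assume "i < dim_vec (x - (2 / (w \<bullet> w) * (w \<bullet> x)) \<cdot>\<^sub>v w)"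
  then have i: "i < k" using w by simp
  let ?c = "2 / (w \<bullet> w)"
  have "(\<Sum>j<k. (of_bool (i = j) - ?c * w $ i * w $ j) * x $ j)
      = (\<Sum>j<k. of_bool (i = j) * x $ j) - ?c * w $ i * (\<Sum>j<k. w $ j * x $ j)"
    by (simp add: algebra_simps sum_subtractf sum_distrib_left sum_divide_distrib)
  also have "(\<Sum>j<k. of_bool (i = j) * x $ j) = x $ i"
    using i by (simp add: of_bool_def if_distrib[of "\<lambda>t. t * _"] cong: if_cong)
  finally show "(householder_mat k w *\<^sub>v x) $ i = (x - (?c * (w \<bullet> x)) \<cdot>\<^sub>v w) $ i"
    using i w x by (simp add: householder_mat_def scalar_prod_def lessThan_atLeast0 of_bool_def)
qed (use w in \<open>simp add: householder_mat_def\<close>)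

lemma householder_mat_involution:
  assumes w: "w \<in> carrier_vec k" "w \<noteq> 0\<^sub>v k"
  shows "householder_mat k w * householder_mat k w = 1\<^sub>m k"
proof (rule eq_mat_by_mult_vec[of _ k k])
  let ?H = "householder_mat k w" and ?c = "2 / (w \<bullet> w)"
  have cww: "?c * (w \<bullet> w) = 2"
    using conjugate_square_greater_0_vec[OF w(1)] w(2) by simp
  fix x :: "real vec" assume x: "x \<in> carrier_vec k"
  have "w \<bullet> (?H *\<^sub>v x) = w \<bullet> x - (?c * (w \<bullet> w)) * (w \<bullet> x)"
    using w x by (simp add: householder_mat_mult_vec scalar_prod_minus_distrib[of w k])
  then have wHx: "w \<bullet> (?H *\<^sub>v x) = - (w \<bullet> x)"
    unfolding cww by simp
  have "?H *\<^sub>v (?H *\<^sub>v x) = ?H *\<^sub>v x - (?c * (w \<bullet> (?H *\<^sub>v x))) \<cdot>\<^sub>v w"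
    using mult_mat_vec_carrier[OF householder_mat_carrier x] by (intro householder_mat_mult_vec[OF w(1)])
  also have "\<dots> = x"
    unfolding wHx unfolding householder_mat_mult_vec[OF w(1) x] using w x by (intro eq_vecI) simp_all
  finally show "(?H * ?H) *\<^sub>v x = 1\<^sub>m k *\<^sub>v x"
    using assoc_mult_mat_vec[OF householder_mat_carrier householder_mat_carrier x] x by simp
qed (use mult_carrier_mat[OF householder_mat_carrier householder_mat_carrier] in simp_all)

lemma householder_mat_swaps:
  assumes u: "u \<in> carrier_vec k" and v: "v \<in> carrier_vec k"
    and len: "u \<bullet> u = v \<bullet> v" and uv: "u \<noteq> v"
  shows "householder_mat k (u - v) *\<^sub>v u = v"
proof -
  define w where "w = u - v"
  have w: "w \<in> carrier_vec k" unfolding w_def using u v by simp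
  have wu: "w \<bullet> u = u \<bullet> u - v \<bullet> u"
    unfolding w_def by (rule minus_scalar_prod_distrib[OF u v u])
  have "w \<bullet> w = w \<bullet> u - w \<bullet> v"
    using scalar_prod_minus_distrib[OF w u v] unfolding w_def .
  also have "w \<bullet> v = u \<bullet> v - v \<bullet> v"
    unfolding w_def by (rule minus_scalar_prod_distrib[OF u v v])
  finally have "w \<bullet> w = 2 * (w \<bullet> u)"
    unfolding wu using len comm_scalar_prod[OF u v] by simp
  moreover have "w \<noteq> 0\<^sub>v k"
    unfolding w_def using minus_vec_eq_zero_iff[OF u v] uv by simp
  ultimately have "2 / (w \<bullet> w) * (w \<bullet> u) = 1"
    using conjugate_square_greater_0_vec[OF w] by simp
  then show ?thesis
    using householder_mat_mult_vec[OF w u] u v unfolding w_def[symmetric] by (auto simp: w_def)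
qed

lemma householder_reflection_exists:
  fixes u :: "real vec"
  assumes u: "u \<in> carrier_vec k" "u \<bullet> u = 1" and k: "k > 0"
  obtains H where "H \<in> carrier_mat k k" "H\<^sup>T = H" "H * H = 1\<^sub>m k" "H *\<^sub>v u = unit_vec k 0"
proof (cases "u = unit_vec k 0")
  case True
  then show thesis using that[of "1\<^sub>m k"] by simp
next
  case False
  have e: "unit_vec k 0 \<in> carrier_vec k" by simp
  have e_e: "unit_vec k 0 \<bullet> unit_vec k 0 = (1 :: real)" using k by simp
  have "u - unit_vec k 0 \<noteq> 0\<^sub>v k"
    using minus_vec_eq_zero_iff[OF u(1) e] False by simp
  then show thesis
    using that[of "householder_mat k (u - unit_vec k 0)"] householder_mat_symmetric
      householder_mat_involution[of "u - unit_vec k 0" k] householder_mat_swaps[OF u(1) e] u e e_e False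
    by simp
qed

section \<open>Positive definite matrices\<close>

lemma pos_defI:
  assumes "P \<in> carrier_mat k k" and "P\<^sup>T = P"
    and "\<And>x. x \<in> carrier_vec k \<Longrightarrow> x \<noteq> 0\<^sub>v k \<Longrightarrow> x \<bullet> (P *\<^sub>v x) > 0"
  shows "pos_def k P"
  using assms unfolding pos_def_def by blast

lemma
  assumes "pos_def k P"
  shows pos_def_carrier: "P \<in> carrier_mat k k"
    and pos_def_symmetric: "P\<^sup>T = P"
    and pos_def_quadratic_form_pos: "\<And>x. x \<in> carrier_vec k \<Longrightarrow> x \<noteq> 0\<^sub>v k \<Longrightarrow> x \<bullet> (P *\<^sub>v x) > 0"
  using assms unfolding pos_def_def by auto

lemma pos_def_quadratic_form_nonneg:
  assumes "pos_def k P" and "x \<in> carrier_vec k"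
  shows "x \<bullet> (P *\<^sub>v x) \<ge> 0"
  using pos_def_quadratic_form_pos[OF assms] assms pos_def_carrier[OF assms(1)]
  by (cases "x = 0\<^sub>v k") auto

lemma pos_def_inj:
  assumes "pos_def k P" and "x \<in> carrier_vec k" and "P *\<^sub>v x = 0\<^sub>v k"
  shows "x = 0\<^sub>v k"
  using pos_def_quadratic_form_pos[OF assms(1,2)] assms(2,3) by force

lemma pos_def_gram_add:
  fixes A B :: "real mat"
  assumes A: "A \<in> carrier_mat m1 k" and B: "B \<in> carrier_mat m2 k"
    and inj: "\<And>x. x \<in> carrier_vec k \<Longrightarrow> A *\<^sub>v x = 0\<^sub>v m1 \<Longrightarrow> B *\<^sub>v x = 0\<^sub>v m2 \<Longrightarrow> x = 0\<^sub>v k"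
  shows "pos_def k (A\<^sup>T * A + B\<^sup>T * B)"
proof (rule pos_defI)
  show "A\<^sup>T * A + B\<^sup>T * B \<in> carrier_mat k k" using A B by simp
  show "(A\<^sup>T * A + B\<^sup>T * B)\<^sup>T = A\<^sup>T * A + B\<^sup>T * B"
    using A B by (simp add: transpose_add[of _ k k] transpose_mult[of _ k m1] transpose_mult[of _ k m2])
  fix x :: "real vec" assume x: "x \<in> carrier_vec k" "x \<noteq> 0\<^sub>v k"
  have Ax: "A *\<^sub>v x \<in> carrier_vec m1" and Bx: "B *\<^sub>v x \<in> carrier_vec m2" using A B x by auto
  have "(A\<^sup>T * A + B\<^sup>T * B) *\<^sub>v x = (A\<^sup>T * A) *\<^sub>v x + (B\<^sup>T * B) *\<^sub>v x"
    using A B x by (intro add_mult_distrib_mat_vec) auto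
  then have "x \<bullet> ((A\<^sup>T * A + B\<^sup>T * B) *\<^sub>v x) = x \<bullet> ((A\<^sup>T * A) *\<^sub>v x) + x \<bullet> ((B\<^sup>T * B) *\<^sub>v x)"
    using A B x by (auto intro!: scalar_prod_add_distrib[of x k])
  also have "\<dots> = (A *\<^sub>v x) \<bullet> (A *\<^sub>v x) + (B *\<^sub>v x) \<bullet> (B *\<^sub>v x)"
    unfolding scalar_prod_transpose_mult_self[OF A x(1)] scalar_prod_transpose_mult_self[OF B x(1)] ..
  moreover have "A *\<^sub>v x \<noteq> 0\<^sub>v m1 \<or> B *\<^sub>v x \<noteq> 0\<^sub>v m2" using inj x by blast
  ultimately show "x \<bullet> ((A\<^sup>T * A + B\<^sup>T * B) *\<^sub>v x) > 0"
    using conjugate_square_greater_0_vec[OF Ax] conjugate_square_greater_0_vec[OF Bx]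
      conjugate_square_ge_0_vec[of "A *\<^sub>v x"] conjugate_square_ge_0_vec[of "B *\<^sub>v x"]
    by auto
qed

lemma pos_def_gram:
  fixes A :: "real mat"
  assumes A: "A \<in> carrier_mat m k"
    and inj: "\<And>x. x \<in> carrier_vec k \<Longrightarrow> A *\<^sub>v x = 0\<^sub>v m \<Longrightarrow> x = 0\<^sub>v k"
  shows "pos_def k (A\<^sup>T * A)"
  using pos_def_gram_add[OF A zero_carrier_mat[of 0 k]] inj A by simp

lemma pos_def_congruence:
  assumes P: "pos_def k P" and H: "H \<in> carrier_mat k k"
    and inj: "\<And>x. x \<in> carrier_vec k \<Longrightarrow> H *\<^sub>v x = 0\<^sub>v k \<Longrightarrow> x = 0\<^sub>v k"
  shows "pos_def k (H\<^sup>T * P * H)"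
proof (rule pos_defI)
  note P_carrier = pos_def_carrier[OF P]
  show "H\<^sup>T * P * H \<in> carrier_mat k k" using H P_carrier by simp
  have "(H\<^sup>T * P * H)\<^sup>T = H\<^sup>T * (H\<^sup>T * P)\<^sup>T"
    using transpose_mult[of "H\<^sup>T * P" k k H k] H P_carrier by simp
  also have "(H\<^sup>T * P)\<^sup>T = P * H"
    using transpose_mult[of "H\<^sup>T" k k P k] H P_carrier pos_def_symmetric[OF P] by simp
  finally show "(H\<^sup>T * P * H)\<^sup>T = H\<^sup>T * P * H"
    using assoc_mult_mat[of "H\<^sup>T" k k P k H k] H P_carrier by simp
  fix x :: "real vec" assume x: "x \<in> carrier_vec k" "x \<noteq> 0\<^sub>v k"
  have Hx: "H *\<^sub>v x \<in> carrier_vec k" "H *\<^sub>v x \<noteq> 0\<^sub>v k" using H x inj by auto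
  have "x \<bullet> ((H\<^sup>T * P * H) *\<^sub>v x) = (H\<^sup>T *\<^sub>v (P *\<^sub>v (H *\<^sub>v x))) \<bullet> x"
    using H P_carrier x
    by (simp add: comm_scalar_prod[of x k] assoc_mult_mat[of _ k k _ k _ k] assoc_mult_mat_vec[of _ k k _ k])
  also have "\<dots> = (P *\<^sub>v (H *\<^sub>v x)) \<bullet> (H *\<^sub>v x)"
    using H P_carrier x by (intro transpose_vec_mult_scalar) auto
  also have "\<dots> = (H *\<^sub>v x) \<bullet> (P *\<^sub>v (H *\<^sub>v x))"
    using H P_carrier x by (intro comm_scalar_prod[of _ k]) auto
  finally show "x \<bullet> ((H\<^sup>T * P * H) *\<^sub>v x) > 0"
    using pos_def_quadratic_form_pos[OF P Hx] by simp
qed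

lemma pos_def_involution_conjugation:
  assumes P: "pos_def k P" and H: "H \<in> carrier_mat k k" "H\<^sup>T = H" "H * H = 1\<^sub>m k"
  shows "pos_def k (H * P * H)"
proof -
  have "x = 0\<^sub>v k" if x: "x \<in> carrier_vec k" "H *\<^sub>v x = 0\<^sub>v k" for x
  proof -
    have "x = H *\<^sub>v (H *\<^sub>v x)" using assoc_mult_mat_vec[OF H(1) H(1) x(1)] H(3) x(1) by simp
    also have "\<dots> = 0\<^sub>v k" unfolding x(2) using H(1) by (intro eq_vecI) auto
    finally show ?thesis .
  qed
  from pos_def_congruence[OF P H(1) this] show ?thesis
    unfolding H(2) .
qed

lemma pos_def_1x1:
  assumes "(a :: real) > 0"
  shows "pos_def 1 (mat 1 1 (\<lambda>_. a))"
proof (rule pos_defI)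
  fix x :: "real vec" assume x: "x \<in> carrier_vec 1" "x \<noteq> 0\<^sub>v 1"
  then have "x $ 0 \<noteq> 0" by (metis carrier_vecD eq_vecI index_zero_vec less_one)
  moreover have "x \<bullet> (mat 1 1 (\<lambda>_. a) *\<^sub>v x) = a * (x $ 0 * x $ 0)"
    using x by (simp add: scalar_prod_def)
  ultimately show "x \<bullet> (mat 1 1 (\<lambda>_. a) *\<^sub>v x) > 0"
    using assms by (metis mult_pos_pos not_real_square_gt_zero)
qed (auto intro!: eq_matI)

lemma pos_def_four_block_diagI:
  assumes A: "pos_def n1 A" and B: "pos_def n2 B"
  shows "pos_def (n1 + n2) (four_block_mat A (0\<^sub>m n1 n2) (0\<^sub>m n2 n1) B)"
    (is "pos_def _ ?M")
proof (rule pos_defI)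
  note carrier = pos_def_carrier[OF A] pos_def_carrier[OF B]
  show "?M \<in> carrier_mat (n1 + n2) (n1 + n2)" using carrier by simp
  show "?M\<^sup>T = ?M"
    using four_block_diag_symmetric_iff[OF carrier] pos_def_symmetric[OF A] pos_def_symmetric[OF B]
    by blast
  fix x :: "real vec" assume x: "x \<in> carrier_vec (n1 + n2)" "x \<noteq> 0\<^sub>v (n1 + n2)"
  define a where "a = vec_first x n1"
  define b where "b = vec_last x n2"
  have ab: "a \<in> carrier_vec n1" "b \<in> carrier_vec n2" "x = a @\<^sub>v b"
    using x(1) unfolding a_def b_def by auto
  then have "a \<noteq> 0\<^sub>v n1 \<or> b \<noteq> 0\<^sub>v n2" using x(2) append_vec_eq_zero_iff by blast
  then have "0 < a \<bullet> (A *\<^sub>v a) \<or> 0 < b \<bullet> (B *\<^sub>v b)"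
    using A B ab pos_def_quadratic_form_pos by blast
  moreover have "0 \<le> a \<bullet> (A *\<^sub>v a)" "0 \<le> b \<bullet> (B *\<^sub>v b)"
    using A B ab pos_def_quadratic_form_nonneg by blast+
  ultimately show "x \<bullet> (?M *\<^sub>v x) > 0"
    unfolding ab(3) four_block_diag_quadratic_form[OF carrier ab(1,2)]
    by (auto intro: add_pos_nonneg add_nonneg_pos)
qed

lemma pos_def_four_block_diagD:
  assumes A: "A \<in> carrier_mat n1 n1" and B: "B \<in> carrier_mat n2 n2"
    and M: "pos_def (n1 + n2) (four_block_mat A (0\<^sub>m n1 n2) (0\<^sub>m n2 n1) B)"
  shows "pos_def n1 A" and "pos_def n2 B"
proof -
  have zero: "A *\<^sub>v 0\<^sub>v n1 = 0\<^sub>v n1" "B *\<^sub>v 0\<^sub>v n2 = 0\<^sub>v n2"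
    using A B by (auto intro!: eq_vecI)
  have sym: "A\<^sup>T = A" "B\<^sup>T = B"
    using four_block_diag_symmetric_iff[OF A B] pos_def_symmetric[OF M] by auto
  have "a \<bullet> (A *\<^sub>v a) > 0" if "a \<in> carrier_vec n1" "a \<noteq> 0\<^sub>v n1" for a
    using pos_def_quadratic_form_pos[OF M, of "a @\<^sub>v 0\<^sub>v n2"] that zero
      four_block_diag_quadratic_form[OF A B that(1), of "0\<^sub>v n2"]
      append_vec_eq_zero_iff[of a n1 "0\<^sub>v n2" n2] by simp
  then show "pos_def n1 A" using A sym by (intro pos_defI)
  have "b \<bullet> (B *\<^sub>v b) > 0" if "b \<in> carrier_vec n2" "b \<noteq> 0\<^sub>v n2" for b
    using pos_def_quadratic_form_pos[OF M, of "0\<^sub>v n1 @\<^sub>v b"] that zero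
      four_block_diag_quadratic_form[OF A B _ that(1), of "0\<^sub>v n1"]
      append_vec_eq_zero_iff[of "0\<^sub>v n1" n1 b n2] by simp
  then show "pos_def n2 B" using B sym by (intro pos_defI)
qed

section \<open>Positive definite square roots\<close>

lemma pos_def_householder_block:
  assumes Q: "pos_def (Suc k) Q"
  obtains H c Q' where "H \<in> carrier_mat (Suc k) (Suc k)" "H\<^sup>T = H" "H * H = 1\<^sub>m (Suc k)"
    and "c > 0" and "pos_def k Q'"
    and "H * Q * H = four_block_mat (mat 1 1 (\<lambda>_. c)) (0\<^sub>m 1 k) (0\<^sub>m k 1) Q'"
proof -
  note Q_carrier = pos_def_carrier[OF Q]
  obtain c u where u: "u \<in> carrier_vec (Suc k)" "u \<bullet> u = 1" "Q *\<^sub>v u = c \<cdot>\<^sub>v u"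
    using real_symmetric_has_unit_eigenvector[OF Q_carrier pos_def_symmetric[OF Q]] by blast
  have "u \<noteq> 0\<^sub>v (Suc k)" using u(2) by auto
  moreover have "c = u \<bullet> (Q *\<^sub>v u)" using u by simp
  ultimately have c: "c > 0"
    using pos_def_quadratic_form_pos[OF Q u(1)] by simp
  obtain H where H: "H \<in> carrier_mat (Suc k) (Suc k)" "H\<^sup>T = H" "H * H = 1\<^sub>m (Suc k)"
    and Hu: "H *\<^sub>v u = unit_vec (Suc k) 0"
    using householder_reflection_exists[OF u(1,2)] by blast
  define A where "A = H * Q * H"
  have A: "pos_def (Suc k) A"
    unfolding A_def by (rule pos_def_involution_conjugation[OF Q H])
  have "A *\<^sub>v unit_vec (Suc k) 0 = H *\<^sub>v (Q *\<^sub>v (H *\<^sub>v (H *\<^sub>v u)))"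
    using H(1) Q_carrier unfolding A_def Hu by (simp add: assoc_mult_mat_vec[of _ "Suc k" "Suc k" _ "Suc k"])
  also have "\<dots> = c \<cdot>\<^sub>v unit_vec (Suc k) 0"
    using assoc_mult_mat_vec[OF H(1) H(1) u(1)] H u Hu by (simp add: mult_mat_vec)
  finally have A_e0: "A *\<^sub>v unit_vec (Suc k) 0 = c \<cdot>\<^sub>v unit_vec (Suc k) 0" .
  define Q' where "Q' = mat k k (\<lambda>(i, j). A $$ (Suc i, Suc j))"
  have A_blocks: "A = four_block_mat (mat 1 1 (\<lambda>_. c)) (0\<^sub>m 1 k) (0\<^sub>m k 1) Q'"
    unfolding Q'_def
    by (rule symmetric_block_diag_if_eigen_unit_vec[OF pos_def_carrier[OF A] pos_def_symmetric[OF A] A_e0])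
  have Q'_carrier: "Q' \<in> carrier_mat k k" unfolding Q'_def by simp
  have "pos_def (1 + k) (four_block_mat (mat 1 1 (\<lambda>_. c)) (0\<^sub>m 1 k) (0\<^sub>m k 1) Q')"
    using A unfolding A_blocks by simp
  from pos_def_four_block_diagD(2)[OF mat_carrier Q'_carrier this] have "pos_def k Q'" .
  then show thesis
    using that H c A_blocks unfolding A_def by blast
qed

lemma pos_def_sqrt_exists:
  assumes "pos_def k Q"
  shows "\<exists>S. pos_def k S \<and> S * S = Q"
  using assms
proof (induction k arbitrary: Q)
  case 0
  have "Q \<in> carrier_mat 0 0" using pos_def_carrier[OF 0] .
  then have "Q * Q = Q" by (intro eq_matI) auto
  then show ?case using 0 by blast
next
  case (Suc k)
  obtain H c Q' where H: "H \<in> carrier_mat (Suc k) (Suc k)" "H\<^sup>T = H" "H * H = 1\<^sub>m (Suc k)"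
    and c: "c > 0" and Q': "pos_def k Q'"
    and HQH: "H * Q * H = four_block_mat (mat 1 1 (\<lambda>_. c)) (0\<^sub>m 1 k) (0\<^sub>m k 1) Q'"
    using pos_def_householder_block[OF Suc.prems] by blast
  obtain S' where S': "pos_def k S'" "S' * S' = Q'"
    using Suc.IH[OF Q'] by blast
  note S'_carrier = pos_def_carrier[OF S'(1)]
  define R where "R = four_block_mat (mat 1 1 (\<lambda>_. sqrt c)) (0\<^sub>m 1 k) (0\<^sub>m k 1) S'"
  have R: "pos_def (Suc k) R"
    using pos_def_four_block_diagI[OF pos_def_1x1[of "sqrt c"] S'(1)] c unfolding R_def by simp
  have "mat 1 1 (\<lambda>_. sqrt c) * mat 1 1 (\<lambda>_. sqrt c) = mat 1 1 (\<lambda>_. c)"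
    using c by (intro eq_matI) (simp_all add: scalar_prod_def)
  then have RR: "R * R = H * Q * H"
    unfolding R_def HQH S'(2)[symmetric] using S'_carrier by (simp add: four_block_diag_mult)
  note R_carrier = pos_def_carrier[OF R]
  have "pos_def (Suc k) (H * R * H)"
    by (rule pos_def_involution_conjugation[OF R H])
  moreover have "(H * R * H) * (H * R * H) = Q"
    using involution_conjugation_mult[OF H(1,3) R_carrier R_carrier]
      involution_conjugation_twice[OF H(1,3) pos_def_carrier[OF Suc.prems]]
    unfolding RR by simp
  ultimately show ?case by blast
qed

definition mat_trace :: "'a :: comm_semiring_0 mat \<Rightarrow> 'a" where
  "mat_trace A = (\<Sum>i<dim_row A. A $$ (i, i))"

lemma mat_trace_mult_comm:
  assumes A: "A \<in> carrier_mat n m" and B: "B \<in> carrier_mat m n"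
  shows "mat_trace (A * B) = mat_trace (B * A)"
proof -
  have "mat_trace (A * B) = (\<Sum>i<n. \<Sum>j<m. A $$ (i, j) * B $$ (j, i))"
    unfolding mat_trace_def using A B
    by (intro sum.cong) (auto simp: scalar_prod_def lessThan_atLeast0 intro!: sum.cong)
  also have "\<dots> = (\<Sum>j<m. \<Sum>i<n. B $$ (j, i) * A $$ (i, j))"
    by (subst sum.swap) (simp add: mult.commute)
  also have "\<dots> = mat_trace (B * A)"
    unfolding mat_trace_def using A B
    by (intro sum.cong) (auto simp: scalar_prod_def lessThan_atLeast0 intro!: sum.cong)
  finally show ?thesis .
qed

lemma mat_trace_add:
  assumes "A \<in> carrier_mat n n" and "B \<in> carrier_mat n n"
  shows "mat_trace (A + B) = mat_trace A + mat_trace B"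
  using assms unfolding mat_trace_def by (simp add: sum.distrib)

lemma mat_trace_congruence:
  assumes D: "D \<in> carrier_mat m k" and R: "pos_def m R"
  shows mat_trace_congruence_nonneg: "mat_trace (D\<^sup>T * R * D) \<ge> 0"
    and mat_trace_congruence_eq_0: "mat_trace (D\<^sup>T * R * D) = 0 \<Longrightarrow> D = 0\<^sub>m m k"
proof -
  note R_carrier = pos_def_carrier[OF R]
  have col: "col D i \<in> carrier_vec m" for i by (intro carrier_vecI) (use D in simp)
  have "(D\<^sup>T * R * D) $$ (i, i) = col D i \<bullet> (R *\<^sub>v col D i)" if "i < k" for i
  proof -
    have "col (R * D) i = R *\<^sub>v col D i" using R_carrier D that by (intro eq_vecI) auto
    then show ?thesis
      using D R_carrier that assoc_mult_mat[of "D\<^sup>T" k m R m D k] by simp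
  qed
  then have trace: "mat_trace (D\<^sup>T * R * D) = (\<Sum>i<k. col D i \<bullet> (R *\<^sub>v col D i))"
    unfolding mat_trace_def using D by simp
  have nonneg: "col D i \<bullet> (R *\<^sub>v col D i) \<ge> 0" for i
    using pos_def_quadratic_form_nonneg[OF R col] .
  then show "mat_trace (D\<^sup>T * R * D) \<ge> 0"
    unfolding trace by (simp add: sum_nonneg)
  assume "mat_trace (D\<^sup>T * R * D) = 0"
  then have "col D j \<bullet> (R *\<^sub>v col D j) = 0" if "j < k" for j
    using sum_nonneg_eq_0_iff[of "{..<k}", OF _ nonneg] that unfolding trace by simp
  then have zero_col: "col D j = 0\<^sub>v m" if "j < k" for j
    using pos_def_quadratic_form_pos[OF R col, of j] that by force
  have "D $$ (i, j) = 0" if "i < m" "j < k" for i j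
    using arg_cong[OF zero_col[OF that(2)], of "\<lambda>v. v $ i"] D that by simp
  then show "D = 0\<^sub>m m k"
    using D by (intro eq_matI) auto
qed

text \<open>For \<open>D = R1 - R2\<close> one has \<open>R1 D + D R2 = R1\<^sup>2 - R2\<^sup>2 = 0\<close>, hence
  \<open>tr (D R1 D) + tr (D R2 D) = 0\<close>; both traces are nonnegative and the first vanishes only for
  \<open>D = 0\<close>.\<close>

lemma pos_def_sqrt_unique:
  assumes R1: "pos_def k R1" and R2: "pos_def k R2" and eq: "R1 * R1 = R2 * R2"
  shows "R1 = R2"
proof -
  note carrier = pos_def_carrier[OF R1] pos_def_carrier[OF R2]
  define D where "D = R1 - R2"
  have D: "D \<in> carrier_mat k k" unfolding D_def using carrier by (simp add: minus_carrier_mat)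
  have D_sym: "D\<^sup>T = D"
    unfolding D_def using transpose_minus[OF carrier] pos_def_symmetric[OF R1] pos_def_symmetric[OF R2]
    by simp
  have "R1 * D = R1 * R1 - R1 * R2" "D * R2 = R1 * R2 - R2 * R2"
    unfolding D_def using carrier by (auto intro: mult_minus_distrib_mat minus_mult_distrib_mat)
  then have "R1 * D + D * R2 = 0\<^sub>m k k"
    using carrier eq by (intro eq_matI) auto
  then have "D * (R1 * D) + D * (D * R2) = 0\<^sub>m k k"
    using mult_add_distrib_mat[of D k k "R1 * D" k "D * R2"] D carrier by simp
  then have "mat_trace (D * (R1 * D)) + mat_trace (D * (D * R2)) = 0"
    using mat_trace_add[of "D * (R1 * D)" k "D * (D * R2)"] D carrier by (simp add: mat_trace_def)
  moreover have "mat_trace (D * (D * R2)) = mat_trace (D\<^sup>T * R2 * D)"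
    using mat_trace_mult_comm[of D k k "D * R2"] D carrier D_sym
    by (simp add: assoc_mult_mat[of _ k k _ k _ k])
  moreover have "mat_trace (D * (R1 * D)) = mat_trace (D\<^sup>T * R1 * D)"
    using D carrier D_sym by (simp add: assoc_mult_mat[of _ k k _ k _ k])
  ultimately have "mat_trace (D\<^sup>T * R1 * D) = 0"
    using mat_trace_congruence_nonneg[OF D R1] mat_trace_congruence_nonneg[OF D R2] by linarith
  then have D0: "D = 0\<^sub>m k k"
    by (rule mat_trace_congruence_eq_0[OF D R1])
  show ?thesis
  proof (rule eq_matI)
    fix i j assume "i < dim_row R2" "j < dim_col R2"
    then show "R1 $$ (i, j) = R2 $$ (i, j)"
      using arg_cong[OF D0, of "\<lambda>M. M $$ (i, j)"] carrier unfolding D_def by simp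
  qed (use carrier in auto)
qed

section \<open>Inverses\<close>

lemma minv_of_inj:
  assumes X: "X \<in> carrier_mat k k"
    and inj: "\<And>v. v \<in> carrier_vec k \<Longrightarrow> X *\<^sub>v v = 0\<^sub>v k \<Longrightarrow> v = 0\<^sub>v k"
  shows "mat_inverse X = Some (minv X)" and "minv X \<in> carrier_mat k k"
    and "X * minv X = 1\<^sub>m k" and "minv X * X = 1\<^sub>m k"
proof -
  have "det X \<noteq> 0" using det_0_iff_vec_prod_zero_field[OF X] inj by blast
  then have "X \<in> Units (ring_mat TYPE(real) k ())" by (rule det_non_zero_imp_unit[OF X])
  then have "mat_inverse X \<noteq> None" using mat_inverse(1)[OF X, where b = "()"] by blast
  then show inv: "mat_inverse X = Some (minv X)" unfolding minv_def by auto
  show "minv X \<in> carrier_mat k k" "X * minv X = 1\<^sub>m k" "minv X * X = 1\<^sub>m k"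
    using mat_inverse(2)[OF X inv] by auto
qed

lemma mat_inverse_eq_Some_iff:
  fixes Y P P' :: "'a :: field mat"
  assumes Y: "Y \<in> carrier_mat n n" and P: "P \<in> carrier_mat n n" and P': "P' \<in> carrier_mat n n"
    and PP': "P * P' = 1\<^sub>m n"
  shows "mat_inverse Y = Some P \<longleftrightarrow> Y = P'"
proof
  assume "mat_inverse Y = Some P"
  then have "Y * P = 1\<^sub>m n" using mat_inverse(2)[OF Y] by blast
  then show "Y = P'"
    using assoc_mult_mat[OF Y P P'] Y P' PP' by simp
next
  assume YP': "Y = P'"
  have P'P: "P' * P = 1\<^sub>m n" by (rule mat_mult_left_right_inverse[OF P P' PP'])
  have "P' \<in> Units (ring_mat TYPE('a) n ())"
    using P P' PP' P'P unfolding Units_def by (auto simp: ring_mat_simps)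
  then obtain B where B: "mat_inverse P' = Some B"
    using mat_inverse(1)[OF P', where b = "()"] by (cases "mat_inverse P'") auto
  then have "P' * B = 1\<^sub>m n" "B \<in> carrier_mat n n" using mat_inverse(2)[OF P'] by auto
  then have "B = P"
    using assoc_mult_mat[OF P P' \<open>B \<in> carrier_mat n n\<close>] P PP' by simp
  then show "mat_inverse Y = Some P" using B YP' by simp
qed

lemma inverse_of_symmetric_mat:
  fixes X Y :: "'a :: comm_ring_1 mat"
  assumes X: "X \<in> carrier_mat k k" and Y: "Y \<in> carrier_mat k k"
    and XY: "X * Y = 1\<^sub>m k" and YX: "Y * X = 1\<^sub>m k" and sym: "X\<^sup>T = X"
  shows "Y\<^sup>T = Y"
proof -
  have "Y\<^sup>T * X = 1\<^sub>m k" using transpose_mult[OF X Y] XY sym by simp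
  then have "Y\<^sup>T * X * Y = Y" using Y by simp
  then show ?thesis using assoc_mult_mat[of "Y\<^sup>T" k k X k Y k] X Y XY by simp
qed

lemma pos_def_minv_inverse:
  assumes P: "pos_def k P"
  shows "mat_inverse P = Some (minv P)" and "minv P \<in> carrier_mat k k"
    and "P * minv P = 1\<^sub>m k" and "minv P * P = 1\<^sub>m k"
proof -
  have "x = 0\<^sub>v k" if "x \<in> carrier_vec k" "P *\<^sub>v x = 0\<^sub>v k" for x
    using pos_def_inj[OF P that] .
  from minv_of_inj[OF pos_def_carrier[OF P] this]
  show "mat_inverse P = Some (minv P)" "minv P \<in> carrier_mat k k"
    "P * minv P = 1\<^sub>m k" "minv P * P = 1\<^sub>m k" by auto
qed

lemma pos_def_minv:
  assumes P: "pos_def k P"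
  shows "pos_def k (minv P)"
proof (rule pos_defI)
  note P_carrier = pos_def_carrier[OF P] and minv_P = pos_def_minv_inverse[OF P]
  show "minv P \<in> carrier_mat k k" by (rule minv_P(2))
  show "(minv P)\<^sup>T = minv P"
    by (rule inverse_of_symmetric_mat[OF P_carrier minv_P(2-4) pos_def_symmetric[OF P]])
  fix x :: "real vec" assume x: "x \<in> carrier_vec k" "x \<noteq> 0\<^sub>v k"
  define y where "y = minv P *\<^sub>v x"
  have y: "y \<in> carrier_vec k" unfolding y_def using minv_P x by simp
  have Py: "P *\<^sub>v y = x"
    unfolding y_def using assoc_mult_mat_vec[OF P_carrier minv_P(2) x(1)] minv_P(3) x by simp
  then have "y \<noteq> 0\<^sub>v k" using x P_carrier by auto
  moreover have "x \<bullet> (minv P *\<^sub>v x) = y \<bullet> (P *\<^sub>v y)"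
    unfolding y_def[symmetric] using Py comm_scalar_prod[OF x(1) y] by simp
  ultimately show "x \<bullet> (minv P *\<^sub>v x) > 0"
    using pos_def_quadratic_form_pos[OF P y] by simp
qed

lemma
  assumes P: "pos_def k P"
  shows pos_def_inv_sqrt: "pos_def k (inv_sqrt P)"
    and inv_sqrt_mult_self: "inv_sqrt P * inv_sqrt P = minv P"
proof -
  obtain R where R: "pos_def k R" "R * R = minv P"
    using pos_def_sqrt_exists[OF pos_def_minv[OF P]] by blast
  have unique: "\<exists>!R. pos_def k R \<and> R * R = minv P"
  proof (rule ex1I[of _ R])
    show "pos_def k R \<and> R * R = minv P" using R by simp
    fix R' assume "pos_def k R' \<and> R' * R' = minv P"
    then show "R' = R" using pos_def_sqrt_unique[of k R' R] R by simp
  qed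
  have "dim_row P = k" using pos_def_carrier[OF P] by simp
  then have "pos_def k (inv_sqrt P) \<and> inv_sqrt P * inv_sqrt P = minv P"
    unfolding inv_sqrt_def using theI'[OF unique] by simp
  then show "pos_def k (inv_sqrt P)" "inv_sqrt P * inv_sqrt P = minv P" by auto
qed

section \<open>Matrices of full column rank\<close>

lemma full_column_rank_inj:
  fixes A :: "real mat"
  assumes A: "A \<in> carrier_mat m k" and rank: "vec_space.rank m A = k"
    and x: "x \<in> carrier_vec k" "A *\<^sub>v x = 0\<^sub>v m"
  shows "x = 0\<^sub>v k"
proof (rule ccontr)
  assume x0: "x \<noteq> 0\<^sub>v k"
  interpret vec_space "TYPE(real)" m .
  show False
  proof (cases "distinct (cols A)")
    case True
    then show False
      using full_rank_lin_indpt[OF A rank] lin_depI[OF A x(1) x0 x(2)] by blast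
  next
    case False
    obtain S where S: "maximal S (\<lambda>T. T \<subseteq> set (cols A) \<and> lin_indpt T)"
      using maximal_exists[of "\<lambda>T. T \<subseteq> set (cols A) \<and> lin_indpt T" "card (set (cols A))" "{}"]
      by (meson List.finite_set card_mono empty_iff empty_subsetI finite_lin_indpt2 rev_finite_subset)
    then have "card S \<le> card (set (cols A))" by (simp add: card_mono maximal_def)
    also have "\<dots> < length (cols A)"
      using False card_distinct card_length le_neq_implies_less by blast
    finally show False using rank_card_indpt[OF A S] rank A by simp
  qed
qed

locale full_column_rank =
  fixes Obs :: "real mat" and q n :: nat
  assumes Obs_carrier: "Obs \<in> carrier_mat q n" and rank: "vec_space.rank q Obs = n"
begin

lemma Obs_inj: "x \<in> carrier_vec n \<Longrightarrow> Obs *\<^sub>v x = 0\<^sub>v q \<Longrightarrow> x = 0\<^sub>v n"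
  by (rule full_column_rank_inj[OF Obs_carrier rank])

definition gram :: "real mat" where
  "gram = Obs\<^sup>T * Obs"

definition proj :: "real mat" where
  "proj = Obs * minv gram * Obs\<^sup>T"

lemma gram_pos_def: "pos_def n gram"
  unfolding gram_def using pos_def_gram[OF Obs_carrier Obs_inj] .

lemma
  shows gram_inverse_carrier: "minv gram \<in> carrier_mat n n"
    and gram_mult_inverse: "gram * minv gram = 1\<^sub>m n"
    and gram_inverse_mult: "minv gram * gram = 1\<^sub>m n"
    and gram_inverse_symmetric: "(minv gram)\<^sup>T = minv gram"
  using pos_def_minv_inverse[OF gram_pos_def] pos_def_symmetric[OF pos_def_minv[OF gram_pos_def]]
  by auto

lemma proj_carrier: "proj \<in> carrier_mat q q"
  unfolding proj_def using Obs_carrier gram_inverse_carrier by simp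

lemma dim_simps [simp]:
  "dim_row Obs = q" "dim_col Obs = n" "dim_row (minv gram) = n" "dim_col (minv gram) = n"
  "dim_row proj = q" "dim_col proj = q"
  using Obs_carrier gram_inverse_carrier proj_carrier by auto

lemma transpose_mult_proj: "Obs\<^sup>T * proj = Obs\<^sup>T"
proof -
  have "Obs\<^sup>T * proj = (Obs\<^sup>T * Obs) * minv gram * Obs\<^sup>T"
    unfolding proj_def by (simp add: assoc_mult_mat_dims)
  then show ?thesis
    unfolding gram_def[symmetric] gram_mult_inverse using Obs_carrier by simp
qed

lemma proj_mult: "proj * Obs = Obs"
proof -
  have "proj * Obs = Obs * (minv gram * (Obs\<^sup>T * Obs))"
    unfolding proj_def by (simp add: assoc_mult_mat_dims)
  then show ?thesis
    unfolding gram_def[symmetric] gram_inverse_mult using Obs_carrier by simp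
qed

lemma proj_symmetric: "proj\<^sup>T = proj"
proof -
  have "proj\<^sup>T = Obs * ((minv gram)\<^sup>T * Obs\<^sup>T)"
    unfolding proj_def
    using transpose_mult[of "Obs * minv gram" q n "Obs\<^sup>T" q] transpose_mult[of Obs q n "minv gram" n]
      Obs_carrier gram_inverse_carrier by simp
  then show ?thesis
    unfolding gram_inverse_symmetric proj_def by (simp add: assoc_mult_mat_dims)
qed

lemma proj_idem: "proj * proj = proj"
proof -
  have "proj * proj = Obs * minv gram * (Obs\<^sup>T * proj)"
    by (simp add: proj_def assoc_mult_mat_dims)
  also have "Obs\<^sup>T * proj = Obs\<^sup>T" by (rule transpose_mult_proj)
  finally show ?thesis using proj_def by simp
qed

lemma proj_eq_one_if_square:
  assumes "q = n"
  shows "proj = 1\<^sub>m q"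
proof -
  have "(minv gram * Obs\<^sup>T) * Obs = minv gram * (Obs\<^sup>T * Obs)"
    by (simp add: assoc_mult_mat_dims)
  then have "(minv gram * Obs\<^sup>T) * Obs = 1\<^sub>m n"
    unfolding gram_def[symmetric] gram_inverse_mult .
  then have "Obs * (minv gram * Obs\<^sup>T) = 1\<^sub>m n"
    using mat_mult_left_right_inverse[of "minv gram * Obs\<^sup>T" n Obs] Obs_carrier gram_inverse_carrier assms
    by simp
  then show ?thesis
    unfolding proj_def using assms by (simp add: assoc_mult_mat_dims)
qed

lemma transpose_mult_proj_sandwich:
  assumes R: "R \<in> carrier_mat q q"
  shows "Obs\<^sup>T * (proj * R * proj) * Obs = Obs\<^sup>T * R * Obs"
proof -
  have "Obs\<^sup>T * (proj * R * proj) * Obs = (Obs\<^sup>T * proj) * R * (proj * Obs)"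
    using carrier_matD[OF R] by (simp add: assoc_mult_mat_dims)
  then show ?thesis
    unfolding transpose_mult_proj proj_mult .
qed

lemma proj_sandwich_eq_0:
  assumes R: "R \<in> carrier_mat q q" and R0: "Obs\<^sup>T * R * Obs = 0\<^sub>m n n"
  shows "proj * R * proj = 0\<^sub>m q q"
proof -
  have "proj * R * proj = Obs * minv gram * (Obs\<^sup>T * R * Obs) * minv gram * Obs\<^sup>T"
    unfolding proj_def using carrier_matD[OF R] by (simp add: assoc_mult_mat_dims)
  then show ?thesis
    unfolding R0 using Obs_carrier gram_inverse_carrier by simp
qed

lemma congruence_solutions:
  assumes G: "G \<in> carrier_mat q q" and sol: "Obs\<^sup>T * G * Obs = Q"
  shows "{X \<in> carrier_mat q q. Obs\<^sup>T * X * Obs = Q} = {G + R - proj * R * proj | R. R \<in> carrier_mat q q}"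
proof -
  have Q: "Q \<in> carrier_mat n n" unfolding sol[symmetric] using G Obs_carrier by simp
  show ?thesis
  proof (intro equalityI subsetI)
    fix X assume "X \<in> {X \<in> carrier_mat q q. Obs\<^sup>T * X * Obs = Q}"
    then have X: "X \<in> carrier_mat q q" and X_sol: "Obs\<^sup>T * X * Obs = Q" by auto
    define R where "R = X - G"
    have R: "R \<in> carrier_mat q q" unfolding R_def using G by (simp add: minus_carrier_mat)
    have "Obs\<^sup>T * R = Obs\<^sup>T * X - Obs\<^sup>T * G"
      unfolding R_def by (rule mult_minus_distrib_mat) (use X G Obs_carrier in auto)
    then have "Obs\<^sup>T * R * Obs = Obs\<^sup>T * X * Obs - Obs\<^sup>T * G * Obs"
      using minus_mult_distrib_mat[of "Obs\<^sup>T * X" n q "Obs\<^sup>T * G" Obs n] X G Obs_carrier by simp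
    then have "proj * R * proj = 0\<^sub>m q q"
      unfolding X_sol sol using proj_sandwich_eq_0[OF R] Q by simp
    then have "X = G + R - proj * R * proj"
      unfolding R_def using X G by (intro eq_matI) auto
    then show "X \<in> {G + R - proj * R * proj | R. R \<in> carrier_mat q q}" using R by blast
  next
    fix X assume "X \<in> {G + R - proj * R * proj | R. R \<in> carrier_mat q q}"
    then obtain R where R: "R \<in> carrier_mat q q" and X: "X = G + R - proj * R * proj" by auto
    have "Obs\<^sup>T * X * Obs = Obs\<^sup>T * G * Obs + Obs\<^sup>T * R * Obs - Obs\<^sup>T * (proj * R * proj) * Obs"
      unfolding X using R proj_carrier Obs_carrier G
      by (intro mult_add_minus_distrib_mat[of _ n q]) auto
    then have "Obs\<^sup>T * X * Obs = Q"
      unfolding sol transpose_mult_proj_sandwich[OF R]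
      using add_minus_cancel_mat[OF Q, of "Obs\<^sup>T * R * Obs"] R Obs_carrier by simp
    moreover have "X \<in> carrier_mat q q" unfolding X using G R proj_carrier by (simp add: minus_carrier_mat)
    ultimately show "X \<in> {X \<in> carrier_mat q q. Obs\<^sup>T * X * Obs = Q}" by simp
  qed
qed

lemma particular_solution:
  assumes S: "S \<in> carrier_mat n n"
  defines "N \<equiv> S * minv gram * Obs\<^sup>T"
  shows "N * Obs = S" and "Obs\<^sup>T * (N\<^sup>T * N) * Obs = S\<^sup>T * S"
proof -
  have N: "N \<in> carrier_mat n q" unfolding N_def using S gram_inverse_carrier Obs_carrier by simp
  have "N * Obs = S * (minv gram * (Obs\<^sup>T * Obs))"
    unfolding N_def using carrier_matD[OF S] by (simp add: assoc_mult_mat_dims)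
  also have "\<dots> = S"
    unfolding gram_def[symmetric] gram_inverse_mult using S by simp
  finally show NOb: "N * Obs = S" .
  have "Obs\<^sup>T * (N\<^sup>T * N) * Obs = (Obs\<^sup>T * N\<^sup>T) * (N * Obs)"
    using carrier_matD[OF N] by (simp add: assoc_mult_mat_dims)
  also have "Obs\<^sup>T * N\<^sup>T = (N * Obs)\<^sup>T"
    using transpose_mult[OF N Obs_carrier] by simp
  finally show "Obs\<^sup>T * (N\<^sup>T * N) * Obs = S\<^sup>T * S"
    unfolding NOb .
qed

lemma complement_proj_gram: "(1\<^sub>m q - proj)\<^sup>T * (1\<^sub>m q - proj) = 1\<^sub>m q - proj"
proof -
  define P where "P = 1\<^sub>m q - proj"
  have P: "P \<in> carrier_mat q q" unfolding P_def using proj_carrier by (simp add: minus_carrier_mat)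
  have "P * proj = 0\<^sub>m q q"
    unfolding P_def using minus_mult_distrib_mat[of "1\<^sub>m q" q q proj proj q] proj_carrier proj_idem
    by simp
  moreover have "P * (1\<^sub>m q - proj) = P * 1\<^sub>m q - P * proj"
    by (rule mult_minus_distrib_mat) (use P proj_carrier in auto)
  ultimately have "P * P = P"
    unfolding P_def[symmetric] using P by (intro eq_matI) auto
  moreover have "P\<^sup>T = P"
    unfolding P_def using transpose_minus[of "1\<^sub>m q" q q proj] proj_carrier proj_symmetric by simp
  ultimately show ?thesis unfolding P_def by simp
qed

text \<open>For \<open>R = 1\<close> the solution \<open>N\<^sup>T N + 1 - proj\<close> is the Gram matrix of \<open>N\<close> stacked on
  \<open>1 - proj\<close>; these two have no common kernel, since \<open>proj x = x\<close> and \<open>N x = 0\<close> force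
  \<open>x = Obs (gram\<^sup>-\<^sup>1 Obs\<^sup>T x) = 0\<close>.\<close>

lemma pos_def_particular_solution:
  assumes S: "S \<in> carrier_mat n n"
    and S_inj: "\<And>x. x \<in> carrier_vec n \<Longrightarrow> S *\<^sub>v x = 0\<^sub>v n \<Longrightarrow> x = 0\<^sub>v n"
  defines "N \<equiv> S * minv gram * Obs\<^sup>T"
  shows "pos_def q (N\<^sup>T * N + 1\<^sub>m q - proj)"
proof -
  define P where "P = 1\<^sub>m q - proj"
  have N: "N \<in> carrier_mat n q" and P: "P \<in> carrier_mat q q"
    unfolding N_def P_def using S proj_carrier by (auto simp: minus_carrier_mat)
  have "x = 0\<^sub>v q" if x: "x \<in> carrier_vec q" "N *\<^sub>v x = 0\<^sub>v n" "P *\<^sub>v x = 0\<^sub>v q" for x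
  proof -
    define y where "y = minv gram *\<^sub>v (Obs\<^sup>T *\<^sub>v x)"
    have y: "y \<in> carrier_vec n" unfolding y_def using x gram_inverse_carrier Obs_carrier by simp
    have "S *\<^sub>v y = N *\<^sub>v x"
      unfolding y_def N_def using S x Obs_carrier gram_inverse_carrier
      by (simp add: assoc_mult_mat_vec[of _ n n _ q] assoc_mult_mat_vec[of _ n n _ n])
    then have "y = 0\<^sub>v n" using S_inj[OF y] x(2) by simp
    moreover have "proj *\<^sub>v x = Obs *\<^sub>v y"
      unfolding y_def proj_def using x Obs_carrier gram_inverse_carrier
      by (simp add: assoc_mult_mat_vec[of _ q n _ q] assoc_mult_mat_vec[of _ n n _ q])
    moreover have "P *\<^sub>v x = x - proj *\<^sub>v x"
      unfolding P_def using minus_mult_distrib_mat_vec[of "1\<^sub>m q" q q proj x] x proj_carrier by simp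
    moreover have "Obs *\<^sub>v 0\<^sub>v n = 0\<^sub>v q" using Obs_carrier by (intro eq_vecI) auto
    ultimately have "P *\<^sub>v x = x"
      using x(1) by simp
    then show "x = 0\<^sub>v q"
      using x(3) by simp
  qed
  then have "pos_def q (N\<^sup>T * N + P\<^sup>T * P)"
    by (rule pos_def_gram_add[OF N P])
  moreover have "N\<^sup>T * N + P\<^sup>T * P = N\<^sup>T * N + 1\<^sub>m q - proj"
    unfolding P_def complement_proj_gram using N proj_carrier
    by (intro eq_matI) (simp_all del: index_mult_mat)
  ultimately show ?thesis by simp
qed

lemma inverse_congruence_solutions:
  assumes \<Sigma>: "pos_def n \<Sigma>"
  defines "N \<equiv> inv_sqrt \<Sigma> * minv gram * Obs\<^sup>T"
  shows "{X \<in> carrier_mat q q. mat_inverse (Obs\<^sup>T * X * Obs) = Some \<Sigma>}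
    = {N\<^sup>T * N + R - proj * R * proj | R. R \<in> carrier_mat q q}"
proof -
  note S = pos_def_inv_sqrt[OF \<Sigma>] inv_sqrt_mult_self[OF \<Sigma>]
  note S_carrier = pos_def_carrier[OF S(1)]
  have "mat_inverse (Obs\<^sup>T * X * Obs) = Some \<Sigma> \<longleftrightarrow> Obs\<^sup>T * X * Obs = minv \<Sigma>"
    if "X \<in> carrier_mat q q" for X
    using mat_inverse_eq_Some_iff[of "Obs\<^sup>T * X * Obs" n \<Sigma> "minv \<Sigma>"] that Obs_carrier
      pos_def_carrier[OF \<Sigma>] pos_def_minv_inverse(2,3)[OF \<Sigma>]
    by simp
  then have "{X \<in> carrier_mat q q. mat_inverse (Obs\<^sup>T * X * Obs) = Some \<Sigma>}
      = {X \<in> carrier_mat q q. Obs\<^sup>T * X * Obs = minv \<Sigma>}"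
    by blast
  also have "\<dots> = {N\<^sup>T * N + R - proj * R * proj | R. R \<in> carrier_mat q q}"
  proof (rule congruence_solutions)
    have "N \<in> carrier_mat n q"
      unfolding N_def using S_carrier gram_inverse_carrier Obs_carrier by simp
    then show "N\<^sup>T * N \<in> carrier_mat q q" by simp
    show "Obs\<^sup>T * (N\<^sup>T * N) * Obs = minv \<Sigma>"
      unfolding N_def using particular_solution(2)[OF S_carrier] S(2) pos_def_symmetric[OF S(1)]
      by simp
  qed
  finally show ?thesis .
qed

lemma pos_def_inverse_congruence_solution:
  assumes \<Sigma>: "pos_def n \<Sigma>"
  defines "N \<equiv> inv_sqrt \<Sigma> * minv gram * Obs\<^sup>T"
  shows "pos_def q (N\<^sup>T * N + 1\<^sub>m q - proj * 1\<^sub>m q * proj)"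
proof -
  note S = pos_def_inv_sqrt[OF \<Sigma>]
  have "x = 0\<^sub>v n" if "x \<in> carrier_vec n" "inv_sqrt \<Sigma> *\<^sub>v x = 0\<^sub>v n" for x
    using pos_def_inj[OF S that] .
  from pos_def_particular_solution[OF pos_def_carrier[OF S] this]
  show ?thesis
    unfolding N_def using proj_carrier proj_idem by simp
qed

lemma congruence_solutions_square:
  assumes square: "q = n" and G: "G \<in> carrier_mat q q"
  shows "{G + R - proj * R * proj | R. R \<in> carrier_mat q q} = {G}"
proof -
  have G_sol: "G + R - proj * R * proj = G" if "R \<in> carrier_mat q q" for R
    unfolding proj_eq_one_if_square[OF square] using G that by (intro eq_matI) auto
  have "G \<in> {G + R - proj * R * proj | R. R \<in> carrier_mat q q}"
    using G_sol[OF zero_carrier_mat, symmetric] zero_carrier_mat by blast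
  then show ?thesis
    using G_sol by auto
qed

end

theorem theorem5:
  fixes n m p K :: nat and A B C D \<Sigma>v :: "real mat"
  assumes A: "A \<in> carrier_mat n n" and B: "B \<in> carrier_mat n m"
    and C: "C \<in> carrier_mat p n" and D: "D \<in> carrier_mat p m"
    and rk: "vec_space.rank (p * K) (obs_mat n p K A C) = n"
    and Sv: "pos_def n \<Sigma>v"
  defines "Ok \<equiv> obs_mat n p K A C"
  defines "Wo \<equiv> Ok\<^sup>T * Ok"
  defines "M \<equiv> Ok * minv Wo * Ok\<^sup>T"
  defines "N \<equiv> inv_sqrt \<Sigma>v * minv Wo * Ok\<^sup>T"
  defines "SX \<equiv> {X \<in> carrier_mat (p * K) (p * K). mat_inverse (Ok\<^sup>T * X * Ok) = Some \<Sigma>v}"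
  defines "SXp \<equiv> {X \<in> SX. pos_def (p * K) X}"
  shows "SX \<noteq> {}
    \<and> SX = {N\<^sup>T * N + R - M * R * M | R. R \<in> carrier_mat (p * K) (p * K)}
    \<and> SXp \<noteq> {}
    \<and> (p * K = n \<longrightarrow> SXp = {N\<^sup>T * N})"
proof -
  interpret full_column_rank Ok "p * K" n
    using rk by unfold_locales (simp_all add: Ok_def obs_mat_def)
  have M: "M = proj" and N: "N = inv_sqrt \<Sigma>v * minv gram * Ok\<^sup>T"
    unfolding M_def N_def proj_def gram_def Wo_def by simp_all
  have SX: "SX = {N\<^sup>T * N + R - M * R * M | R. R \<in> carrier_mat (p * K) (p * K)}"
    unfolding SX_def M N by (rule inverse_congruence_solutions[OF Sv])
  have X0: "N\<^sup>T * N + 1\<^sub>m (p * K) - M * 1\<^sub>m (p * K) * M \<in> SXp"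
    unfolding SXp_def SX using pos_def_inverse_congruence_solution[OF Sv] one_carrier_mat
    unfolding M N by blast
  have "N \<in> carrier_mat n (p * K)"
    unfolding N using pos_def_carrier[OF pos_def_inv_sqrt[OF Sv]] gram_inverse_carrier Obs_carrier
    by simp
  then have SX_square: "SX = {N\<^sup>T * N}" if "p * K = n"
    unfolding SX M using congruence_solutions_square[OF that, of "N\<^sup>T * N"] by simp
  show ?thesis
  proof (intro conjI impI)
    show "SX \<noteq> {}" "SXp \<noteq> {}" using X0 unfolding SXp_def by auto
    show "SX = {N\<^sup>T * N + R - M * R * M | R. R \<in> carrier_mat (p * K) (p * K)}" by (fact SX)
    show "SXp = {N\<^sup>T * N}" if "p * K = n"
      using X0 SX_square[OF that] unfolding SXp_def by auto
  qed
qed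

end
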